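(* Let $\gamma\in(0,2)$, let $L$ be a positive measurable function slowly varying at infinity, and set $g(n)=n^{\gamma}L(n)$. Suppose there exist constants $C_1,C_2>0$ such that $G(x)\le C_1x^{2-\gamma}L(1/x)$ for all sufficiently small $x>0$ and $\operatorname{Var}(S_n)\ge C_2\,g(n)$ for all sufficiently large $n$. Then there exists a constant $C_3>0$ such that $G(x)>C_3x^{2-\gamma}L(1/x)$ for all sufficiently small $x>0$.
   Context: Let $X_1,X_2,\ldots$ be a sequence of centred, weakly stationary, real random variables with finite second moments. Its spectral measure is the finite Borel measure $F$ on $[-\pi,\pi]$ such that $\operatorname{Cov}(X_0,X_k)=\int_{-\pi}^{\pi}e^{\mathrm{i}tk}\,F(\mathrm{d}t)$ for all integers $k$; it is assumed that $F$ is symmetric about the origin. Define $G(x)=F([-x,x])$ for $0\le x\le\pi$, and $S_n=X_1+\cdots+X_n$. A positive measurable function $L$ is slowly varying at infinity if $L(\lambda x)/L(x)\to1$ as $x\to\infty$ for every $\lambda>0$. *)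

theory Defs
  imports "HOL-Probability.Probability"
begin

definition covar :: "'a measure \<Rightarrow> ('a \<Rightarrow> real) \<Rightarrow> ('a \<Rightarrow> real) \<Rightarrow> real" where
  "covar M X Y = (\<integral>\<omega>. (X \<omega> - (\<integral>\<omega>'. X \<omega>' \<partial>M)) * (Y \<omega> - (\<integral>\<omega>'. Y \<omega>' \<partial>M)) \<partial>M)"

definition slowly_varying :: "(real \<Rightarrow> real) \<Rightarrow> bool" where
  "slowly_varying L \<longleftrightarrow> L \<in> borel_measurable borel \<and> (\<forall>x. L x > 0) \<and>
     (\<forall>c>0. ((\<lambda>x. L (c * x) / L x) \<longlongrightarrow> 1) at_top)"

definition weakly_stationary :: "'a measure \<Rightarrow> (nat \<Rightarrow> 'a \<Rightarrow> real) \<Rightarrow> bool" where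
  "weakly_stationary M X \<longleftrightarrow>
     (\<forall>i. X i \<in> borel_measurable M \<and> integrable M (\<lambda>\<omega>. (X i \<omega>)\<^sup>2)
          \<and> (\<integral>\<omega>. X i \<omega> \<partial>M) = 0) \<and>
     (\<forall>j k. covar M (X j) (X (j + k)) = covar M (X 0) (X k))"

definition spectral_measure_of :: "'a measure \<Rightarrow> (nat \<Rightarrow> 'a \<Rightarrow> real) \<Rightarrow> real measure \<Rightarrow> bool" where
  "spectral_measure_of M X F \<longleftrightarrow>
     sets F = sets borel \<and> finite_measure F \<and> emeasure F (- {-pi..pi}) = 0 \<and>
     (\<forall>A\<in>sets borel. emeasure F (uminus ` A) = emeasure F A) \<and>
     (\<forall>k::nat. complex_of_real (covar M (X 0) (X k)) =
        (\<integral>t. exp (\<i> * complex_of_real (t * real k)) \<partial>F))"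

end

theory Submission
  imports Defs "HOL-Real_Asymp.Real_Asymp"
begin

text \<open>
  Let \<open>G(x) = F [-x, x]\<close> and \<open>V\<^sub>n = Var S\<^sub>n\<close>. The proof compares two estimates of \<open>V\<^sub>n\<close>.

  Spectral side: \<open>V\<^sub>n = \<integral> K\<^sub>n dF\<close> with \<open>K\<^sub>n(t) = |\<Sum>\<^sub>k\<^sub>=\<^sub>1\<^sup>n e\<^sup>i\<^sup>k\<^sup>t|\<^sup>2\<close>, and \<open>K\<^sub>n(t) \<le> min (n\<^sup>2, 36/t\<^sup>2)\<close> on \<open>[-\<pi>,\<pi>]\<close>.
  Splitting \<open>[-\<pi>,\<pi>]\<close> into \<open>[-u,u]\<close> and dyadic shells \<open>2\<^sup>j u < |t| \<le> 2\<^sup>j\<^sup>+\<^sup>1 u\<close>, the assumed upper bound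
  \<open>G(x) \<le> C\<^sub>1 x\<^sup>2\<^sup>-\<^sup>\<gamma> L(1/x)\<close> and Potter's bound for \<open>L\<close> give, for all small \<open>u\<close> and all \<open>n\<close>,
  \<open>V\<^sub>n \<le> n\<^sup>2 G(u) + K\<^sub>1 u\<^sup>-\<^sup>\<gamma> L(1/u) + K\<^sub>2\<close>.

  Choosing \<open>u = a/n\<close> with a large constant \<open>a\<close>, the last two terms are at most \<open>C\<^sub>2 n\<^sup>\<gamma> L(n)/2\<close>,
  so the assumed lower bound \<open>V\<^sub>n \<ge> C\<^sub>2 n\<^sup>\<gamma> L(n)\<close> forces \<open>n\<^sup>2 G(a/n) \<ge> C\<^sub>2 n\<^sup>\<gamma> L(n)/2\<close>. Monotonicity of \<open>G\<close>
  and Potter's bound once more transfer this from the points \<open>a/n\<close> to all small \<open>x\<close>.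
\<close>

section \<open>Slowly varying functions\<close>

definition good_shifts :: "(real \<Rightarrow> real) \<Rightarrow> (nat \<Rightarrow> real) \<Rightarrow> real \<Rightarrow> nat \<Rightarrow> real set" where
  "good_shifts h z e n = {v\<in>{0..2}. \<forall>m\<ge>n. \<bar>h (z m + v) - h (z m)\<bar> < e}"

lemma good_shifts_measurable:
  assumes "h \<in> borel_measurable borel"
  shows "good_shifts h z e n \<in> sets lborel"
proof -
  have "{v. \<bar>h (z m + v) - h (z m)\<bar> < e} \<in> sets borel" for m
    using assms by measurable
  moreover have "good_shifts h z e n = {0..2} \<inter> (\<Inter>m\<in>{n..}. {v. \<bar>h (z m + v) - h (z m)\<bar> < e})"
    unfolding good_shifts_def by auto
  ultimately show ?thesis by auto
qed

text \<open>The good shifts increase with \<open>n\<close> and exhaust \<open>[0,2]\<close>, so eventually their measure exceeds \<open>3/2\<close>.\<close>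
lemma good_shifts_large:
  assumes hm: "h \<in> borel_measurable borel"
    and hlim: "\<And>u. ((\<lambda>x. h (x + u) - h x) \<longlongrightarrow> 0) at_top"
    and e: "e > 0" and z: "filterlim z at_top sequentially"
  shows "\<forall>\<^sub>F n in sequentially. ennreal (3/2) < emeasure lborel (good_shifts h z e n)"
proof -
  have "incseq (good_shifts h z e)"
    unfolding incseq_def good_shifts_def by auto
  then have "(\<lambda>n. emeasure lborel (good_shifts h z e n))
      \<longlonglongrightarrow> emeasure lborel (\<Union>n. good_shifts h z e n)"
    using good_shifts_measurable[OF hm] by (intro Lim_emeasure_incseq) auto
  moreover have "(\<Union>n. good_shifts h z e n) = {0..2}"
  proof (intro equalityI subsetI)
    fix v :: real assume v: "v \<in> {0..2}"
    have "((\<lambda>m. h (z m + v) - h (z m)) \<longlongrightarrow> 0) sequentially"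
      using filterlim_compose[OF hlim[of v] z] by simp
    then have "\<forall>\<^sub>F m in sequentially. \<bar>h (z m + v) - h (z m)\<bar> < e"
      using e by (auto dest!: tendstoD[where e=e] simp: dist_real_def)
    then obtain N where "\<forall>m\<ge>N. \<bar>h (z m + v) - h (z m)\<bar> < e"
      by (auto simp: eventually_sequentially)
    then show "v \<in> (\<Union>n. good_shifts h z e n)"
      using v by (auto simp: good_shifts_def)
  qed (auto simp: good_shifts_def)
  ultimately have "(\<lambda>n. emeasure lborel (good_shifts h z e n)) \<longlonglongrightarrow> ennreal 2"
    by simp
  moreover have "ennreal (3/2) < ennreal 2" by (simp add: ennreal_less_iff)
  ultimately show ?thesis by (rule order_tendstoD)
qed

lemma lborel_translate_preimage:
  fixes A :: "real set"
  assumes "A \<in> sets lborel"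
  shows "(+) c -` A \<in> sets lborel" and "emeasure lborel ((+) c -` A) = emeasure lborel A"
proof -
  show "(+) c -` A \<in> sets lborel"
    using measurable_sets[OF _ assms, of "(+) c" lborel] by simp
  have "emeasure lborel ((+) c -` A) = emeasure (distr lborel borel ((+) c)) A"
    using assms by (subst emeasure_distr) auto
  then show "emeasure lborel ((+) c -` A) = emeasure lborel A"
    by (simp add: lborel_distr_plus)
qed

lemma large_subsets_intersect:
  fixes A B :: "real set"
  assumes "A \<in> sets lborel" "B \<in> sets lborel" "A \<union> B \<subseteq> {0..3}"
    and "ennreal (3/2) < emeasure lborel A" "ennreal (3/2) < emeasure lborel B"
  shows "A \<inter> B \<noteq> {}"
proof
  assume "A \<inter> B = {}"
  then have "emeasure lborel (A \<union> B) = emeasure lborel A + emeasure lborel B"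
    using assms by (simp add: plus_emeasure)
  also have "\<dots> > ennreal (3/2) + ennreal (3/2)"
    using assms by (simp add: add_strict_mono)
  finally have "ennreal 3 < emeasure lborel (A \<union> B)"
    by (simp add: ennreal_plus[symmetric] del: ennreal_plus)
  moreover have "emeasure lborel (A \<union> B) \<le> emeasure lborel {0..3::real}"
    using assms by (intro emeasure_mono) auto
  ultimately show False by simp
qed

text \<open>The uniform convergence theorem for slowly varying functions, in additive form: if
  \<open>h\<close> is measurable and \<open>h (x + u) - h x \<rightarrow> 0\<close> for every fixed \<open>u\<close>, the convergence is uniform
  for \<open>u \<in> [0,1]\<close>. Otherwise there are \<open>x\<^sub>n \<rightarrow> \<infinity>\<close> and \<open>s\<^sub>n \<in> [0,1]\<close> with a jump \<open>\<ge> e\<close>; the good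
  shifts of \<open>x\<^sub>n\<close> and (translated by \<open>s\<^sub>n\<close>) of \<open>x\<^sub>n + s\<^sub>n\<close> both have measure \<open>> 3/2\<close> inside
  \<open>[0,3]\<close>, and a common point bridges the jump with two steps \<open>< e/2\<close>.\<close>
lemma uniform_convergence_additive:
  fixes h :: "real \<Rightarrow> real"
  assumes hm: "h \<in> borel_measurable borel"
    and hlim: "\<And>u. ((\<lambda>x. h (x + u) - h x) \<longlongrightarrow> 0) at_top"
    and e: "e > 0"
  shows "\<exists>X0. \<forall>x\<ge>X0. \<forall>s\<in>{0..1}. \<bar>h (x + s) - h x\<bar> < e"
proof (rule ccontr)
  assume "\<not> ?thesis"
  then have "\<forall>n::nat. \<exists>x s. x \<ge> real n \<and> s \<in> {0..1} \<and> \<bar>h (x + s) - h x\<bar> \<ge> e"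
    by (metis linorder_not_le)
  then obtain x s where x: "\<And>n. x n \<ge> real n" and s: "\<And>n. s n \<in> {0..1}"
    and bad: "\<And>n. \<bar>h (x n + s n) - h (x n)\<bar> \<ge> e"
    by metis
  define y where "y n = x n + s n" for n
  have "real n \<le> y n" for n
    using x[of n] s[of n] by (simp add: y_def)
  then have "filterlim x at_top sequentially" "filterlim y at_top sequentially"
    using x by (auto intro!: filterlim_at_top_mono[OF filterlim_real_sequentially])
  then obtain n where A: "ennreal (3/2) < emeasure lborel (good_shifts h x (e/2) n)"
    and B: "ennreal (3/2) < emeasure lborel (good_shifts h y (e/2) n)"
    using eventually_conj[OF good_shifts_large[OF hm hlim, of "e/2" x]
        good_shifts_large[OF hm hlim, of "e/2" y]] e
    by (auto dest: eventually_happens)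
  define C where "C = (+) (- s n) -` good_shifts h y (e/2) n"
  have "good_shifts h x (e/2) n \<inter> C \<noteq> {}"
  proof (rule large_subsets_intersect)
    show "good_shifts h x (e/2) n \<union> C \<subseteq> {0..3}"
      using s[of n] unfolding good_shifts_def C_def y_def by auto
    show "C \<in> sets lborel" "ennreal (3/2) < emeasure lborel C"
      unfolding C_def using lborel_translate_preimage[OF good_shifts_measurable[OF hm]] B by auto
  qed (use A good_shifts_measurable[OF hm] in auto)
  then obtain w where "w \<in> good_shifts h x (e/2) n" "w \<in> C" by blast
  then have "\<bar>h (x n + w) - h (x n)\<bar> < e/2" "\<bar>h (y n + (w - s n)) - h (y n)\<bar> < e/2"
    unfolding good_shifts_def C_def by auto
  then show False using bad[of n] by (simp add: y_def) (smt (verit))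
qed

lemma increments_along_chain:
  fixes h :: "real \<Rightarrow> real"
  assumes step: "\<forall>x\<ge>X0. \<forall>s\<in>{0..1}. \<bar>h (x + s) - h x\<bar> < e"
  shows "x \<ge> X0 \<Longrightarrow> 0 \<le> d \<Longrightarrow> d \<le> real k \<Longrightarrow> \<bar>h (x + d) - h x\<bar> \<le> e * real (Suc k)"
proof (induction k arbitrary: x d)
  case 0
  then show ?case using step by fastforce
next
  case (Suc k)
  have e: "e > 0" using step[rule_format, of X0 0] by auto
  show ?case
  proof (cases "d \<le> 1")
    case True
    then have "\<bar>h (x + d) - h x\<bar> < e" using step Suc.prems by auto
    moreover have "e \<le> e * real (Suc (Suc k))" using e by simp
    ultimately show ?thesis by linarith
  next
    case False
    have "\<bar>h (x + 1) - h x\<bar> < e" using step Suc.prems by auto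
    moreover have "\<bar>h (x + d) - h (x + 1)\<bar> \<le> e * real (Suc k)"
      using Suc.IH[of "x + 1" "d - 1"] Suc.prems False by auto
    ultimately have "\<bar>h (x + d) - h x\<bar> \<le> e * real (Suc k) + e" by arith
    then show ?thesis by (simp add: algebra_simps)
  qed
qed

lemma additive_increment_bound:
  fixes h :: "real \<Rightarrow> real"
  assumes "h \<in> borel_measurable borel"
    and "\<And>u. ((\<lambda>x. h (x + u) - h x) \<longlongrightarrow> 0) at_top" and "e > 0"
  shows "\<exists>X0. \<forall>a b. X0 \<le> a \<longrightarrow> X0 \<le> b \<longrightarrow> \<bar>h a - h b\<bar> \<le> e * (\<bar>a - b\<bar> + 2)"
proof -
  obtain X0 where X0: "\<forall>x\<ge>X0. \<forall>s\<in>{0..1}. \<bar>h (x + s) - h x\<bar> < e"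
    using uniform_convergence_additive[OF assms] by blast
  have "\<bar>h a - h b\<bar> \<le> e * (\<bar>a - b\<bar> + 2)" if "X0 \<le> a" "X0 \<le> b" for a b
  proof -
    define k where "k = nat \<lceil>\<bar>a - b\<bar>\<rceil>"
    have "\<bar>h (min a b + \<bar>a - b\<bar>) - h (min a b)\<bar> \<le> e * real (Suc k)"
      using increments_along_chain[OF X0, of "min a b" "\<bar>a - b\<bar>" k] that
      unfolding k_def by linarith
    moreover have "\<bar>h (min a b + \<bar>a - b\<bar>) - h (min a b)\<bar> = \<bar>h a - h b\<bar>"
      by (cases "a \<le> b") (auto simp: abs_if)
    moreover have "e * real (Suc k) \<le> e * (\<bar>a - b\<bar> + 2)"
      using \<open>e > 0\<close> unfolding k_def by (intro mult_left_mono) linarith+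
    ultimately show ?thesis by linarith
  qed
  then show ?thesis by blast
qed

lemma slowly_varying_log_increments:
  assumes sv: "slowly_varying L"
  shows "(\<lambda>x. ln (L (exp x))) \<in> borel_measurable borel"
    and "((\<lambda>x. ln (L (exp (x + u))) - ln (L (exp x))) \<longlongrightarrow> 0) at_top"
proof -
  have Lm: "L \<in> borel_measurable borel" and Lpos: "\<And>x. L x > 0"
    and Llim: "\<And>c. c > 0 \<Longrightarrow> ((\<lambda>x. L (c * x) / L x) \<longlongrightarrow> 1) at_top"
    using sv unfolding slowly_varying_def by auto
  show "(\<lambda>x. ln (L (exp x))) \<in> borel_measurable borel"
    using Lm by measurable
  have "((\<lambda>x. ln (L (exp u * exp x) / L (exp x))) \<longlongrightarrow> ln 1) at_top"
    by (intro tendsto_ln filterlim_compose[OF Llim exp_at_top]) simp_all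
  moreover have "ln (L (exp u * exp x) / L (exp x)) = ln (L (exp (x + u))) - ln (L (exp x))" for x
    using Lpos[of "exp u * exp x"] Lpos[of "exp x"] by (simp add: ln_div exp_add mult.commute)
  ultimately show "((\<lambda>x. ln (L (exp (x + u))) - ln (L (exp x))) \<longlongrightarrow> 0) at_top"
    by simp
qed

lemma potter_bound:
  assumes sv: "slowly_varying L" and eta: "\<eta> > 0"
  shows "\<exists>Y0>0. \<forall>y z c. Y0 \<le> y \<longrightarrow> Y0 \<le> z \<longrightarrow> y \<le> c * z \<longrightarrow> z \<le> c * y \<longrightarrow>
           L y \<le> exp (2 * \<eta>) * c powr \<eta> * L z"
proof -
  have Lpos: "\<And>x. L x > 0" using sv unfolding slowly_varying_def by auto
  define h where "h x = ln (L (exp x))" for x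
  obtain X0 where X0: "\<And>a b. X0 \<le> a \<Longrightarrow> X0 \<le> b \<Longrightarrow> \<bar>h a - h b\<bar> \<le> \<eta> * (\<bar>a - b\<bar> + 2)"
    using additive_increment_bound[of h \<eta>] slowly_varying_log_increments[OF sv] eta
    unfolding h_def by blast
  have "L y \<le> exp (2 * \<eta>) * c powr \<eta> * L z"
    if y: "exp X0 \<le> y" and z: "exp X0 \<le> z" and yz: "y \<le> c * z" "z \<le> c * y" for y z c
  proof -
    have pos: "y > 0" "z > 0" using y z exp_gt_zero[of X0] by linarith+
    then have "0 < c * z" using yz by linarith
    then have c: "c > 0" using pos by (simp add: zero_less_mult_iff)
    have logs: "X0 \<le> ln y" "X0 \<le> ln z" using y z pos by (metis ln_exp ln_le_cancel_iff exp_gt_zero)+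
    have "ln y \<le> ln (c * z)" "ln z \<le> ln (c * y)"
      using yz pos c by simp_all
    then have "ln y \<le> ln c + ln z" "ln z \<le> ln c + ln y"
      using pos c by (simp_all add: ln_mult)
    then have "\<eta> * (\<bar>ln y - ln z\<bar> + 2) \<le> \<eta> * (ln c + 2)"
      using eta by (intro mult_left_mono) auto
    then have "h (ln y) \<le> 2 * \<eta> + \<eta> * ln c + h (ln z)"
      using X0[OF logs] by (simp add: algebra_simps)
    then have "exp (h (ln y)) \<le> exp (2 * \<eta>) * exp (\<eta> * ln c) * exp (h (ln z))"
      by (simp flip: exp_add)
    then show ?thesis
      using pos c Lpos by (simp add: h_def powr_def mult.commute)
  qed
  then show ?thesis by (intro exI[of _ "exp X0"]) auto
qed

lemma slowly_varying_power_at_top: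
  assumes sv: "slowly_varying L" and "\<delta> > 0"
  shows "filterlim (\<lambda>x. x powr \<delta> * L x) at_top at_top"
proof -
  have Lpos: "\<And>x. L x > 0" using sv unfolding slowly_varying_def by auto
  obtain Y0 where Y0: "Y0 > 0" and pot: "\<And>y z c. Y0 \<le> y \<Longrightarrow> Y0 \<le> z \<Longrightarrow> y \<le> c * z \<Longrightarrow> z \<le> c * y \<Longrightarrow>
      L y \<le> exp (2 * (\<delta>/2)) * c powr (\<delta>/2) * L z"
    using potter_bound[OF sv, of "\<delta>/2"] \<open>\<delta> > 0\<close> by auto
  define k where "k = L Y0 * Y0 powr (\<delta>/2) / exp \<delta>"
  have "filterlim (\<lambda>x. x powr (\<delta>/2)) at_top at_top"
    using \<open>\<delta> > 0\<close> by real_asymp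
  then have "filterlim (\<lambda>x. k * x powr (\<delta>/2)) at_top at_top"
    using Y0 Lpos unfolding k_def by (intro filterlim_tendsto_pos_mult_at_top[OF tendsto_const]) auto
  moreover have "k * x powr (\<delta>/2) \<le> x powr \<delta> * L x" if x: "x \<ge> Y0" for x
  proof -
    have "Y0 * Y0 \<le> x * x" using x Y0 by (intro mult_mono) auto
    then have "Y0 \<le> x / Y0 * x" "x \<le> x / Y0 * Y0" using Y0 by (simp_all add: field_simps)
    then have "L Y0 \<le> exp \<delta> * (x / Y0) powr (\<delta>/2) * L x"
      using pot[OF order_refl x] by simp
    also have "\<dots> = exp \<delta> * x powr (\<delta>/2) * L x / Y0 powr (\<delta>/2)"
      using x Y0 by (simp add: powr_divide)
    finally have "k \<le> x powr (\<delta>/2) * L x"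
      using Y0 unfolding k_def by (simp add: field_simps)
    then have "k * x powr (\<delta>/2) \<le> x powr (\<delta>/2) * L x * x powr (\<delta>/2)"
      by (rule mult_right_mono) simp
    also have "\<dots> = x powr \<delta> * L x"
      by (simp add: powr_add[symmetric])
    finally show ?thesis .
  qed
  ultimately show ?thesis
    using filterlim_at_top_mono[of "\<lambda>x. k * x powr (\<delta>/2)" at_top "\<lambda>x. x powr \<delta> * L x"]
    by (auto simp: eventually_at_top_linorder)
qed

lemma eventually_absorbs_constant:
  assumes "slowly_varying L" and "0 < \<gamma>" and "0 < C"
  shows "\<forall>\<^sub>F n in sequentially. K \<le> C * (real n powr \<gamma> * L (real n))"
proof -
  have "\<forall>\<^sub>F n in sequentially. K / C \<le> real n powr \<gamma> * L (real n)"
    using filterlim_compose[OF slowly_varying_power_at_top[OF assms(1,2)] filterlim_real_sequentially]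
    by (simp add: filterlim_at_top)
  then show ?thesis
    by eventually_elim (use \<open>0 < C\<close> in \<open>simp add: field_simps\<close>)
qed

section \<open>The kernel \<open>|\<Sum>\<^sub>k\<^sub>=\<^sub>1\<^sup>n e\<^sup>i\<^sup>k\<^sup>t|\<^sup>2\<close>\<close>

text \<open>\<open>n\<close> times the Fejer kernel; its integral against the spectral measure is \<open>Var S\<^sub>n\<close>.\<close>
definition fejer_kernel :: "nat \<Rightarrow> real \<Rightarrow> real" where
  "fejer_kernel n t = (cmod (\<Sum>k=1..n. cis t ^ k))\<^sup>2"

lemma fejer_kernel_double_sum:
  "fejer_kernel n t = (\<Sum>i=1..n. \<Sum>j=1..n. cos (t * (real j - real i)))"
proof -
  have "(\<Sum>k=1..n. cis t ^ k) = (\<Sum>k=1..n. cis (t * real k))"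
  proof (intro sum.cong refl)
    fix k show "cis t ^ k = cis (t * real k)" using Complex.DeMoivre[of t k] by (simp add: mult.commute)
  qed
  then have "fejer_kernel n t = (\<Sum>k=1..n. cos (t * real k))\<^sup>2 + (\<Sum>k=1..n. sin (t * real k))\<^sup>2"
    by (simp add: fejer_kernel_def cmod_power2)
  also have "\<dots> = (\<Sum>i=1..n. \<Sum>j=1..n. cos (t * real i) * cos (t * real j) + sin (t * real i) * sin (t * real j))"
    unfolding power2_eq_square sum_product sum.distrib by simp
  also have "\<dots> = (\<Sum>i=1..n. \<Sum>j=1..n. cos (t * (real j - real i)))"
    by (simp add: right_diff_distrib cos_diff mult.commute)
  finally show ?thesis .
qed

lemma fejer_kernel_nonneg: "fejer_kernel n t \<ge> 0"
  unfolding fejer_kernel_def by simp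

lemma fejer_kernel_le_square: "fejer_kernel n t \<le> (real n)\<^sup>2"
proof -
  have "cmod (\<Sum>k=1..n. cis t ^ k) \<le> (\<Sum>k=1..n. cmod (cis t ^ k))"
    by (rule norm_sum)
  also have "\<dots> = real n" by (simp add: norm_power)
  finally show ?thesis unfolding fejer_kernel_def by (simp add: power_mono)
qed

text \<open>A crude form of Jordan's inequality, enough to bound \<open>|e\<^sup>i\<^sup>t - 1|\<close> from below.\<close>
lemma sin_ge_third:
  fixes s :: real assumes "0 \<le> s" "s \<le> 2" shows "s / 3 \<le> sin s"
proof -
  have "\<bar>sin s - (\<Sum>m<3. sin_coeff m * s ^ m)\<bar> \<le> inverse (fact 3) * \<bar>s\<bar> ^ 3"
    by (rule Maclaurin_sin_bound)
  moreover have "(\<Sum>m<3. sin_coeff m * s ^ m) = s"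
    by (simp add: sin_coeff_def numeral_3_eq_3)
  moreover have "inverse (fact 3) * \<bar>s\<bar> ^ 3 = s * s\<^sup>2 / 6"
    using assms by (simp add: fact_numeral power3_eq_cube power2_eq_square)
  moreover have "s * s\<^sup>2 \<le> s * 4"
    using assms power_mono[of s 2 2] by (intro mult_left_mono) auto
  ultimately show ?thesis by linarith
qed

text \<open>Away from the origin, summing the geometric series gives \<open>K\<^sub>n(t) \<le> 36/t\<^sup>2\<close> on \<open>[-\<pi>,\<pi>]\<close>.\<close>
lemma fejer_kernel_le_inverse_square:
  assumes "t \<noteq> 0" and "\<bar>t\<bar> \<le> pi"
  shows "fejer_kernel n t \<le> 36 / t\<^sup>2"
proof -
  define z where "z = cis t"
  have "(z - 1) * (\<Sum>k=1..n. z ^ k) = z * (z ^ n - 1)"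
  proof -
    have "(\<Sum>k=1..n. z ^ k) = z * (\<Sum>k<n. z ^ k)"
      by (induction n) (simp_all add: algebra_simps)
    then show ?thesis by (simp add: power_diff_1_eq algebra_simps)
  qed
  moreover have "cmod (z * (z ^ n - 1)) \<le> 2"
    using norm_triangle_ineq4[of "z ^ n" 1] by (simp add: z_def norm_mult norm_power)
  ultimately have numer: "cmod (z - 1) * cmod (\<Sum>k=1..n. z ^ k) \<le> 2"
    by (metis norm_mult)
  text \<open>\<open>|e\<^sup>i\<^sup>t - 1| = 2 |sin (t/2)| \<ge> |t|/3\<close> on \<open>[-\<pi>, \<pi>]\<close>.\<close>
  have "(cmod (z - 1))\<^sup>2 = (cos t - 1)\<^sup>2 + (sin t)\<^sup>2"
    by (simp add: z_def cmod_power2)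
  also have "\<dots> = 2 - 2 * cos t"
    using sin_cos_squared_add[of t] by (simp add: power2_eq_square algebra_simps)
  also have "\<dots> = (2 * sin (\<bar>t\<bar>/2))\<^sup>2"
    using cos_double_sin[of "\<bar>t\<bar>/2"] by (simp add: power_mult_distrib)
  finally have sq: "(cmod (z - 1))\<^sup>2 = (2 * sin (\<bar>t\<bar>/2))\<^sup>2" .
  have "0 \<le> sin (\<bar>t\<bar>/2)"
    using assms pi_gt_zero by (intro sin_ge_zero) auto
  then have "cmod (z - 1) = 2 * sin (\<bar>t\<bar>/2)"
    by (intro power2_eq_imp_eq[OF sq]) auto
  also have "\<dots> \<ge> \<bar>t\<bar>/3"
    using sin_ge_third[of "\<bar>t\<bar>/2"] assms pi_less_4 by auto
  finally have "\<bar>t\<bar>/3 * cmod (\<Sum>k=1..n. z ^ k) \<le> 2"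
    using numer by (meson mult_right_mono norm_ge_zero order_trans)
  then have "cmod (\<Sum>k=1..n. z ^ k) \<le> 6 / \<bar>t\<bar>"
    using assms by (simp add: field_simps)
  then have "fejer_kernel n t \<le> (6 / \<bar>t\<bar>)\<^sup>2"
    unfolding fejer_kernel_def z_def by (intro power_mono) auto
  then show ?thesis by (simp add: power_divide)
qed

section \<open>The variance of partial sums\<close>

lemma covar_centred:
  assumes "(\<integral>\<omega>. X \<omega> \<partial>M) = 0" "(\<integral>\<omega>. Y \<omega> \<partial>M) = 0"
  shows "covar M X Y = (\<integral>\<omega>. X \<omega> * Y \<omega> \<partial>M)"
  using assms unfolding covar_def by simp

lemma covar_sum_sum:
  assumes "prob_space M"
    and meas: "\<And>i. X i \<in> borel_measurable M"
    and sq: "\<And>i. integrable M (\<lambda>\<omega>. (X i \<omega>)\<^sup>2)"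
    and centred: "\<And>i. (\<integral>\<omega>. X i \<omega> \<partial>M) = 0"
  shows "covar M (\<lambda>\<omega>. \<Sum>i\<in>I. X i \<omega>) (\<lambda>\<omega>. \<Sum>i\<in>I. X i \<omega>) = (\<Sum>i\<in>I. \<Sum>j\<in>I. covar M (X i) (X j))"
proof -
  interpret prob_space M by fact
  have int: "integrable M (X i)" for i
    using square_integrable_imp_integrable[OF meas sq] .
  have prod: "integrable M (\<lambda>\<omega>. X i \<omega> * X j \<omega>)" for i j
  proof (rule Bochner_Integration.integrable_bound[OF Bochner_Integration.integrable_add[OF sq[of i] sq[of j]]])
    show "(\<lambda>\<omega>. X i \<omega> * X j \<omega>) \<in> borel_measurable M" using meas by measurable
    have "\<bar>a * b\<bar> \<le> a\<^sup>2 + b\<^sup>2" for a b :: real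
    proof -
      have "2 * (\<bar>a\<bar> * \<bar>b\<bar>) \<le> a\<^sup>2 + b\<^sup>2"
        using sum_squares_bound[of "\<bar>a\<bar>" "\<bar>b\<bar>"] by (simp add: mult.assoc)
      moreover have "0 \<le> \<bar>a\<bar> * \<bar>b\<bar>" by simp
      ultimately show ?thesis unfolding abs_mult by linarith
    qed
    then show "AE \<omega> in M. norm (X i \<omega> * X j \<omega>) \<le> norm ((X i \<omega>)\<^sup>2 + (X j \<omega>)\<^sup>2)"
      by auto
  qed
  have "(\<integral>\<omega>. (\<Sum>i\<in>I. X i \<omega>) \<partial>M) = 0"
    using int centred by (simp add: integral_sum)
  then have "covar M (\<lambda>\<omega>. \<Sum>i\<in>I. X i \<omega>) (\<lambda>\<omega>. \<Sum>i\<in>I. X i \<omega>)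
      = (\<integral>\<omega>. (\<Sum>i\<in>I. \<Sum>j\<in>I. X i \<omega> * X j \<omega>) \<partial>M)"
    by (simp add: covar_centred sum_product)
  also have "\<dots> = (\<Sum>i\<in>I. \<Sum>j\<in>I. covar M (X i) (X j))"
    using prod centred by (simp add: integral_sum covar_centred)
  finally show ?thesis .
qed

text \<open>The real part of the spectral representation: the covariance at lag \<open>k\<close> is the
  integral of \<open>cos (k t)\<close>.\<close>
lemma covar_lag_spectral:
  assumes sp: "spectral_measure_of M X F"
  shows "covar M (X 0) (X k) = (\<integral>t. cos (t * real k) \<partial>F)"
proof -
  interpret F: finite_measure F
    using sp unfolding spectral_measure_of_def by auto
  have measF: "borel_measurable F = borel_measurable borel"
    using sp unfolding spectral_measure_of_def by (intro measurable_cong_sets) auto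
  have int: "integrable F (\<lambda>t. exp (\<i> * complex_of_real (t * real k)))"
    by (rule F.integrable_const_bound[where B=1]) (auto simp: measF)
  have "covar M (X 0) (X k) = Re (\<integral>t. exp (\<i> * complex_of_real (t * real k)) \<partial>F)"
    using sp unfolding spectral_measure_of_def by (metis Re_complex_of_real)
  also have "\<dots> = (\<integral>t. Re (exp (\<i> * complex_of_real (t * real k))) \<partial>F)"
    using int by simp
  also have "\<dots> = (\<integral>t. cos (t * real k) \<partial>F)"
    by (simp add: Re_exp)
  finally show ?thesis .
qed

text \<open>By stationarity and symmetry of covariance and cosine, only the lag \<open>|j - i|\<close> matters.\<close>
lemma covar_spectral:
  assumes ws: "weakly_stationary M X" and sp: "spectral_measure_of M X F"
  shows "covar M (X i) (X j) = (\<integral>t. cos (t * (real j - real i)) \<partial>F)"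
proof -
  have centred: "\<And>i. (\<integral>\<omega>. X i \<omega> \<partial>M) = 0"
    and stat: "\<And>j k. covar M (X j) (X (j + k)) = covar M (X 0) (X k)"
    using ws unfolding weakly_stationary_def by auto
  note lag = covar_lag_spectral[OF sp]
  show ?thesis
  proof (cases "i \<le> j")
    case True
    then have "covar M (X i) (X j) = covar M (X 0) (X (j - i))"
      using stat[of i "j - i"] by simp
    then show ?thesis using True by (simp add: lag)
  next
    case False
    have "covar M (X i) (X j) = covar M (X j) (X i)"
      using centred by (simp add: covar_centred mult.commute)
    also have "\<dots> = covar M (X 0) (X (i - j))"
      using stat[of j "i - j"] False by simp
    also have "\<dots> = (\<integral>t. cos (t * (real j - real i)) \<partial>F)"
    proof (unfold lag, intro Bochner_Integration.integral_cong refl)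
      fix t
      have "t * (real j - real i) = - (t * real (i - j))"
        using False by (simp add: algebra_simps)
      then show "cos (t * real (i - j)) = cos (t * (real j - real i))" by simp
    qed
    finally show ?thesis .
  qed
qed

lemma variance_partial_sum_spectral:
  assumes "prob_space M" and ws: "weakly_stationary M X" and sp: "spectral_measure_of M X F"
  shows "covar M (\<lambda>\<omega>. \<Sum>i=1..n. X i \<omega>) (\<lambda>\<omega>. \<Sum>i=1..n. X i \<omega>) = (\<integral>t. fejer_kernel n t \<partial>F)"
proof -
  interpret F: finite_measure F
    using sp unfolding spectral_measure_of_def by auto
  have measF: "borel_measurable F = borel_measurable borel"
    using sp unfolding spectral_measure_of_def by (intro measurable_cong_sets) auto
  have "covar M (\<lambda>\<omega>. \<Sum>i=1..n. X i \<omega>) (\<lambda>\<omega>. \<Sum>i=1..n. X i \<omega>)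
      = (\<Sum>i=1..n. \<Sum>j=1..n. (\<integral>t. cos (t * (real j - real i)) \<partial>F))"
    using ws unfolding weakly_stationary_def
    by (simp add: covar_sum_sum[OF assms(1)] covar_spectral[OF ws sp])
  also have "\<dots> = (\<integral>t. fejer_kernel n t \<partial>F)"
  proof -
    have "integrable F (\<lambda>t. cos (t * r))" for r
      by (rule F.integrable_const_bound[where B=1]) (auto simp: measF)
    then show ?thesis unfolding fejer_kernel_double_sum by (simp add: integral_sum)
  qed
  finally show ?thesis .
qed

section \<open>Dyadic decomposition of the kernel integral\<close>

text \<open>A step-function majorant of \<open>36/t\<^sup>2\<close> outside \<open>[-u,u]\<close>: the weight \<open>36/(2\<^sup>j u)\<^sup>2\<close> on the
  shell \<open>|t| \<le> 2\<^sup>j\<^sup>+\<^sup>1 u\<close> for \<open>j < J\<close>, plus the constant \<open>36/(2\<^sup>J u)\<^sup>2\<close> beyond.\<close>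
definition dyadic_majorant :: "nat \<Rightarrow> real \<Rightarrow> real \<Rightarrow> real" where
  "dyadic_majorant J u t =
     (\<Sum>j<J. 144 / (2^Suc j * u)\<^sup>2 * indicator {-(2^Suc j * u)..2^Suc j * u} t) + 36 / (2^J * u)\<^sup>2"

lemma fejer_kernel_measurable [measurable]: "fejer_kernel n \<in> borel_measurable borel"
proof -
  have "fejer_kernel n = (\<lambda>t. \<Sum>i=1..n. \<Sum>j=1..n. cos (t * (real j - real i)))"
    using fejer_kernel_double_sum by blast
  then show ?thesis by simp
qed

lemma dyadic_majorant_nonneg: "dyadic_majorant J u t \<ge> 0"
  unfolding dyadic_majorant_def by (intro add_nonneg_nonneg sum_nonneg) auto

lemma dyadic_majorant_Suc:
  "dyadic_majorant (Suc J) u t = 144 / (2 * u)\<^sup>2 * indicator {-(2 * u)..2 * u} t + dyadic_majorant J (2 * u) t"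
  unfolding dyadic_majorant_def sum.lessThan_Suc_shift
  by (simp add: power2_eq_square algebra_simps)

lemma inverse_square_le_dyadic_majorant:
  assumes "0 < u" "u < \<bar>t\<bar>"
  shows "36 / t\<^sup>2 \<le> dyadic_majorant J u t"
  using assms
proof (induction J arbitrary: u)
  case 0
  then have "u\<^sup>2 \<le> t\<^sup>2" by (simp flip: abs_le_square_iff)
  then show ?case using 0 by (simp add: dyadic_majorant_def frac_le)
next
  case (Suc J)
  show ?case
  proof (cases "\<bar>t\<bar> \<le> 2 * u")
    case True
    have "u\<^sup>2 \<le> t\<^sup>2" using Suc.prems by (simp flip: abs_le_square_iff)
    then have "36 / t\<^sup>2 \<le> 144 / (2 * u)\<^sup>2 * indicator {-(2 * u)..2 * u} t"
      using True Suc.prems by (auto simp: frac_le indicator_def abs_le_iff power_mult_distrib)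
    then show ?thesis
      unfolding dyadic_majorant_Suc using dyadic_majorant_nonneg[of J "2 * u" t] by linarith
  next
    case False
    then have "36 / t\<^sup>2 \<le> dyadic_majorant J (2 * u) t"
      using Suc.IH[of "2 * u"] Suc.prems by auto
    then show ?thesis
      unfolding dyadic_majorant_Suc using False by (auto simp: indicator_def abs_le_iff)
  qed
qed

lemma fejer_kernel_le_dyadic:
  assumes "0 < u" "\<bar>t\<bar> \<le> pi"
  shows "fejer_kernel n t \<le> (real n)\<^sup>2 * indicator {-u..u} t + dyadic_majorant J u t"
proof (cases "\<bar>t\<bar> \<le> u")
  case True
  then show ?thesis
    using fejer_kernel_le_square[of n t] dyadic_majorant_nonneg[of J u t]
    by (auto simp: indicator_def abs_le_iff)
next
  case False
  then have "fejer_kernel n t \<le> dyadic_majorant J u t"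
    using fejer_kernel_le_inverse_square[of t n] inverse_square_le_dyadic_majorant[of u t J] assms
    by force
  then show ?thesis using False by (auto simp: indicator_def abs_le_iff)
qed

lemma integral_fejer_kernel_dyadic:
  fixes F :: "real measure"
  assumes sets: "sets F = sets borel" and "finite_measure F"
    and supp: "emeasure F (- {-pi..pi}) = 0" and u: "0 < u"
  shows "(\<integral>t. fejer_kernel n t \<partial>F) \<le> (real n)\<^sup>2 * measure F {-u..u}
     + (\<Sum>j<J. 144 / (2^Suc j * u)\<^sup>2 * measure F {-(2^Suc j * u)..2^Suc j * u})
     + 36 / (2^J * u)\<^sup>2 * measure F (space F)"
proof -
  interpret F: finite_measure F by fact
  have measF: "borel_measurable F = borel_measurable borel"
    by (rule measurable_cong_sets[OF sets refl])
  have int_ind: "integrable F (indicator {a..b} :: real \<Rightarrow> real)" for a b :: real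
    using sets F.emeasure_finite[of "{a..b}"]
    by (intro integrable_real_indicator) (auto simp: less_top[symmetric])
  then have intI: "integrable F (\<lambda>t. c * indicator {a..b} t :: real)" for c a b :: real
    by (rule integrable_mult_right)
  have "AE t in F. \<bar>t\<bar> \<le> pi"
    by (rule AE_I'[of "- {-pi..pi}"]) (use supp sets in \<open>auto\<close>)
  then have "AE t in F. fejer_kernel n t \<le> (real n)\<^sup>2 * indicator {-u..u} t + dyadic_majorant J u t"
    by eventually_elim (rule fejer_kernel_le_dyadic[OF u])
  moreover have "integrable F (fejer_kernel n)"
    using fejer_kernel_le_square fejer_kernel_nonneg
    by (intro F.integrable_const_bound[where B="(real n)\<^sup>2"]) (auto simp: measF)
  moreover have "integrable F (\<lambda>t. (real n)\<^sup>2 * indicator {-u..u} t + dyadic_majorant J u t)"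
    unfolding dyadic_majorant_def
    by (intro Bochner_Integration.integrable_add Bochner_Integration.integrable_sum intI) auto
  ultimately have "(\<integral>t. fejer_kernel n t \<partial>F) \<le> (\<integral>t. (real n)\<^sup>2 * indicator {-u..u} t + dyadic_majorant J u t \<partial>F)"
    by (intro integral_mono_AE)
  also have "\<dots> = (real n)\<^sup>2 * measure F {-u..u}
     + (\<Sum>j<J. 144 / (2^Suc j * u)\<^sup>2 * measure F {-(2^Suc j * u)..2^Suc j * u})
     + 36 / (2^J * u)\<^sup>2 * measure F (space F)"
    unfolding dyadic_majorant_def
    using intI int_ind
    by (simp add: Bochner_Integration.integral_sum sets_eq_imp_space_eq[OF sets])
  finally show ?thesis .
qed

section \<open>The upper estimate of the variance\<close>

lemma potter_bound_at_zero:
  assumes "slowly_varying L" and "\<eta> > 0"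
  shows "\<exists>\<delta>>0. \<forall>u s. 0 < u \<longrightarrow> u \<le> s \<longrightarrow> s \<le> \<delta> \<longrightarrow>
           L (1 / s) \<le> exp (2 * \<eta>) * (s / u) powr \<eta> * L (1 / u)"
proof -
  obtain Y0 where Y0: "Y0 > 0" and pot: "\<And>y z c. Y0 \<le> y \<Longrightarrow> Y0 \<le> z \<Longrightarrow> y \<le> c * z \<Longrightarrow> z \<le> c * y \<Longrightarrow>
      L y \<le> exp (2 * \<eta>) * c powr \<eta> * L z"
    using potter_bound[OF assms] by blast
  have "L (1 / s) \<le> exp (2 * \<eta>) * (s / u) powr \<eta> * L (1 / u)"
    if "0 < u" "u \<le> s" "s \<le> 1 / Y0" for u s
  proof (rule pot)
    show "Y0 \<le> 1 / s" using that Y0 by (simp add: field_simps)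
    also have "1 / s \<le> 1 / u" using that by (intro divide_left_mono) auto
    finally show "Y0 \<le> 1 / u" .
    have "u * u \<le> s * s" using that by (intro mult_mono) auto
    then show "1 / s \<le> s / u * (1 / u)" "1 / u \<le> s / u * (1 / s)"
      using that by (simp_all add: field_simps)
  qed
  then show ?thesis using Y0 by (intro exI[of _ "1 / Y0"]) auto
qed

lemma geometric_sum_le:
  fixes r :: real
  assumes "0 \<le> r" "r < 1"
  shows "(\<Sum>j<J. r ^ Suc j) \<le> 1 / (1 - r)"
proof -
  have "(\<Sum>j<J. r ^ Suc j) \<le> (\<Sum>j<J. r ^ j)"
    using assms by (intro sum_mono) (simp add: mult_left_le_one_le)
  also have "\<dots> = (1 - r ^ J) / (1 - r)" using assms by (simp add: sum_gp_strict)
  also have "\<dots> \<le> 1 / (1 - r)" using assms by (simp add: divide_right_mono)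
  finally show ?thesis .
qed

lemma dyadic_scale_exists:
  fixes u \<delta> :: real
  assumes "0 < u" "u \<le> \<delta>"
  shows "\<exists>J. 2 ^ J * u \<le> \<delta> \<and> \<delta> < 2 ^ Suc J * u"
proof -
  obtain N where "\<delta> / u < 2 ^ N" using real_arch_pow[of 2 "\<delta> / u"] by auto
  then have "\<delta> < 2 ^ N * u" using assms by (simp add: field_simps)
  moreover have "\<not> \<delta> < 2 ^ 0 * u" using assms by simp
  ultimately obtain k where "\<not> \<delta> < 2 ^ k * u" "\<delta> < 2 ^ (k + 1) * u"
    using ex_least_nat_less[of "\<lambda>N. \<delta> < 2 ^ N * u"] by auto
  then show ?thesis by (intro exI[of _ k]) auto
qed

text \<open>The weight of the \<open>j\<close>-th dyadic shell against a regularly varying mass \<open>s\<^sup>2\<^sup>-\<^sup>\<gamma>\<close>,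
  corrected by the Potter factor \<open>w\<^sup>\<gamma>\<^sup>/\<^sup>2\<close>, decays geometrically in \<open>w = 2\<^sup>j\<^sup>+\<^sup>1\<close>.\<close>
lemma dyadic_weight:
  fixes u \<gamma> :: real
  assumes "0 < u"
  shows "144 / (2 ^ Suc j * u)\<^sup>2 * (2 ^ Suc j * u) powr (2 - \<gamma>) * (2 ^ Suc j) powr (\<gamma> / 2)
       = 144 * (2 powr (- \<gamma> / 2)) ^ Suc j * u powr (- \<gamma>)"
proof -
  define w :: real where "w = 2 ^ Suc j"
  have w: "w > 0" unfolding w_def by simp
  have "(w * u) powr (2 - \<gamma>) = (w * u)\<^sup>2 * (w * u) powr (- \<gamma>)"
    using w assms by (simp add: powr_add[symmetric] flip: powr_numeral)
  then have shell: "(w * u) powr (2 - \<gamma>) / (w * u)\<^sup>2 = w powr (- \<gamma>) * u powr (- \<gamma>)"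
    using w assms by (simp add: powr_mult)
  have "w = 2 powr real (Suc j)" unfolding w_def by (rule powr_realpow[symmetric]) simp
  then have "w powr (- \<gamma>) * w powr (\<gamma> / 2) = 2 powr (real (Suc j) * (- \<gamma> / 2))"
    by (simp add: powr_powr mult.commute flip: powr_add)
  also have "\<dots> = (2 powr (- \<gamma> / 2)) powr real (Suc j)"
    by (simp add: powr_powr mult.commute)
  also have "\<dots> = (2 powr (- \<gamma> / 2)) ^ Suc j"
    by (rule powr_realpow) simp
  finally have geometric: "w powr (- \<gamma>) * w powr (\<gamma> / 2) = (2 powr (- \<gamma> / 2)) ^ Suc j" .
  have "144 / (w * u)\<^sup>2 * (w * u) powr (2 - \<gamma>) * w powr (\<gamma> / 2)
      = 144 * ((w * u) powr (2 - \<gamma>) / (w * u)\<^sup>2) * w powr (\<gamma> / 2)"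
    by simp
  also have "\<dots> = 144 * (w powr (- \<gamma>) * w powr (\<gamma> / 2)) * u powr (- \<gamma>)"
    unfolding shell by (simp add: ac_simps)
  also have "\<dots> = 144 * (2 powr (- \<gamma> / 2)) ^ Suc j * u powr (- \<gamma>)"
    unfolding geometric ..
  finally show ?thesis unfolding w_def .
qed
lemma dyadic_sum_bound:
  fixes G L :: "real \<Rightarrow> real"
  assumes u: "0 < u" and J: "2 ^ J * u \<le> \<delta>" and \<gamma>: "0 < \<gamma>"
    and upper: "\<And>s. 0 < s \<Longrightarrow> s \<le> \<delta> \<Longrightarrow> G s \<le> C1 * s powr (2 - \<gamma>) * L (1 / s)"
    and potter: "\<And>s. u \<le> s \<Longrightarrow> s \<le> \<delta> \<Longrightarrow> L (1 / s) \<le> E * (s / u) powr (\<gamma> / 2) * L (1 / u)"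
    and nonneg: "0 \<le> C1" "0 \<le> E" "0 \<le> L (1 / u)"
  shows "(\<Sum>j<J. 144 / (2 ^ Suc j * u)\<^sup>2 * G (2 ^ Suc j * u))
           \<le> 144 * C1 * E / (1 - 2 powr (- \<gamma> / 2)) * u powr (- \<gamma>) * L (1 / u)"
proof -
  define r :: real where "r = 2 powr (- \<gamma> / 2)"
  have r: "0 \<le> r" "r < 1" unfolding r_def using \<gamma> by (auto intro: powr_less_one)
  define K where "K = 144 * C1 * E * u powr (- \<gamma>) * L (1 / u)"
  have K: "K \<ge> 0" unfolding K_def using nonneg by simp
  have shell: "144 / (2 ^ Suc j * u)\<^sup>2 * G (2 ^ Suc j * u) \<le> K * r ^ Suc j" if "j < J" for j
  proof -
    have "(2::real) ^ Suc j \<le> 2 ^ J" using that by (intro power_increasing) auto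
    moreover have "(1::real) \<le> 2 ^ Suc j" by (rule one_le_power) simp
    ultimately have s: "2 ^ Suc j * u \<le> \<delta>" "u \<le> 2 ^ Suc j * u"
      using J u by (auto intro: order_trans[OF mult_right_mono])
    have "L (1 / (2 ^ Suc j * u)) \<le> E * (2 ^ Suc j) powr (\<gamma> / 2) * L (1 / u)"
      using potter[OF s(2,1)] u by simp
    then have "C1 * (2 ^ Suc j * u) powr (2 - \<gamma>) * L (1 / (2 ^ Suc j * u))
        \<le> C1 * (2 ^ Suc j * u) powr (2 - \<gamma>) * (E * (2 ^ Suc j) powr (\<gamma> / 2) * L (1 / u))"
      using nonneg by (intro mult_left_mono) simp_all
    then have "G (2 ^ Suc j * u) \<le> C1 * (2 ^ Suc j * u) powr (2 - \<gamma>) * (E * (2 ^ Suc j) powr (\<gamma> / 2) * L (1 / u))"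
      using upper[of "2 ^ Suc j * u"] u s by simp
    then have "144 / (2 ^ Suc j * u)\<^sup>2 * G (2 ^ Suc j * u)
        \<le> 144 / (2 ^ Suc j * u)\<^sup>2 * (C1 * (2 ^ Suc j * u) powr (2 - \<gamma>) * (E * (2 ^ Suc j) powr (\<gamma> / 2) * L (1 / u)))"
      by (rule mult_left_mono) simp
    also have "\<dots> = C1 * E * L (1 / u) * (144 / (2 ^ Suc j * u)\<^sup>2 * (2 ^ Suc j * u) powr (2 - \<gamma>) * (2 ^ Suc j) powr (\<gamma> / 2))"
      by (simp only: ac_simps)
    also have "\<dots> = K * r ^ Suc j"
      unfolding dyadic_weight[OF u] K_def r_def by (simp only: ac_simps)
    finally show ?thesis .
  qed
  have "(\<Sum>j<J. 144 / (2 ^ Suc j * u)\<^sup>2 * G (2 ^ Suc j * u)) \<le> K * (\<Sum>j<J. r ^ Suc j)"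
    unfolding sum_distrib_left using shell by (intro sum_mono) simp
  also have "\<dots> \<le> K * (1 / (1 - r))"
    using geometric_sum_le[OF r] K by (rule mult_left_mono)
  finally show ?thesis unfolding K_def r_def by simp
qed

lemma dyadic_tail_bound:
  fixes u \<delta> :: real
  assumes "0 < \<delta>" "\<delta> < 2 ^ Suc J * u"
  shows "36 / (2 ^ J * u)\<^sup>2 \<le> 144 / \<delta>\<^sup>2"
proof -
  have "0 < 2 ^ Suc J * u" using assms by linarith
  then have "0 < u" by (simp add: zero_less_mult_iff)
  have "\<delta>\<^sup>2 \<le> (2 * (2 ^ J * u))\<^sup>2"
    using assms by (intro power_mono) auto
  then have "144 / (2 * (2 ^ J * u))\<^sup>2 \<le> 144 / \<delta>\<^sup>2"
    using assms \<open>0 < u\<close> by (intro divide_left_mono) auto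
  then show ?thesis by (simp add: power_mult_distrib mult.commute)
qed

lemma integral_fejer_kernel_upper_estimate:
  fixes F :: "real measure" and L :: "real \<Rightarrow> real"
  assumes sets: "sets F = sets borel" and fin: "finite_measure F"
    and supp: "emeasure F (- {-pi..pi}) = 0"
    and \<gamma>: "0 < \<gamma>" and sv: "slowly_varying L" and C1: "0 \<le> C1"
    and upper: "\<forall>\<^sub>F x in at_right 0. measure F {-x..x} \<le> C1 * x powr (2 - \<gamma>) * L (1 / x)"
  shows "\<exists>\<delta>>0. \<exists>K1\<ge>0. \<exists>K2. \<forall>n u. 0 < u \<longrightarrow> u \<le> \<delta> \<longrightarrow>
           (\<integral>t. fejer_kernel n t \<partial>F) \<le> (real n)\<^sup>2 * measure F {-u..u} + K1 * u powr (- \<gamma>) * L (1 / u) + K2"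
proof -
  interpret F: finite_measure F by fact
  have Lnn: "\<And>x. 0 \<le> L x" using sv unfolding slowly_varying_def by (auto intro: less_imp_le)
  obtain \<delta>1 where "\<delta>1 > 0" and pot: "\<And>u s. 0 < u \<Longrightarrow> u \<le> s \<Longrightarrow> s \<le> \<delta>1 \<Longrightarrow>
      L (1 / s) \<le> exp \<gamma> * (s / u) powr (\<gamma> / 2) * L (1 / u)"
    using potter_bound_at_zero[OF sv, of "\<gamma> / 2"] \<gamma> by auto
  obtain \<delta>2 where "\<delta>2 > 0" and up: "\<And>s. 0 < s \<Longrightarrow> s < \<delta>2 \<Longrightarrow> measure F {-s..s} \<le> C1 * s powr (2 - \<gamma>) * L (1 / s)"
    using upper unfolding eventually_at_right_field by auto
  define \<delta> where "\<delta> = min \<delta>1 (\<delta>2 / 2)"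
  have \<delta>: "0 < \<delta>" "\<delta> \<le> \<delta>1" "\<delta> < \<delta>2"
    unfolding \<delta>_def using \<open>\<delta>1 > 0\<close> \<open>\<delta>2 > 0\<close> by auto
  define K1 where "K1 = 144 * C1 * exp \<gamma> / (1 - 2 powr (- \<gamma> / 2))"
  define K2 where "K2 = 144 * measure F (space F) / \<delta>\<^sup>2"
  have "(\<integral>t. fejer_kernel n t \<partial>F) \<le> (real n)\<^sup>2 * measure F {-u..u} + K1 * u powr (- \<gamma>) * L (1 / u) + K2"
    if u: "0 < u" "u \<le> \<delta>" for n u
  proof -
    obtain J where J: "2 ^ J * u \<le> \<delta>" "\<delta> < 2 ^ Suc J * u"
      using dyadic_scale_exists[OF u] by blast
    have "(\<Sum>j<J. 144 / (2 ^ Suc j * u)\<^sup>2 * measure F {-(2 ^ Suc j * u)..2 ^ Suc j * u})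
        \<le> K1 * u powr (- \<gamma>) * L (1 / u)"
      unfolding K1_def using u \<delta> C1 Lnn
      by (intro dyadic_sum_bound[OF u(1) J(1) \<gamma>] up) (auto intro: pot)
    moreover have "36 / (2 ^ J * u)\<^sup>2 * measure F (space F) \<le> K2"
      using mult_right_mono[OF dyadic_tail_bound[OF \<delta>(1) J(2)], of "measure F (space F)"]
      unfolding K2_def by simp
    ultimately show ?thesis
      using integral_fejer_kernel_dyadic[OF sets fin supp u(1), of n J] by linarith
  qed
  moreover have "K1 \<ge> 0"
    unfolding K1_def using C1 \<gamma> by (simp add: powr_less_one less_imp_le)
  ultimately show ?thesis using \<delta> by blast
qed

section \<open>The lower bound\<close>

text \<open>Rescaling by a fixed factor \<open>a \<ge> 1\<close> costs at most a factor \<open>E a\<^sup>\<gamma>\<^sup>/\<^sup>2\<close> in \<open>L\<close>, so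
  \<open>(a/x)\<^sup>-\<^sup>\<gamma> L(x/a) \<le> E a\<^sup>-\<^sup>\<gamma>\<^sup>/\<^sup>2 x\<^sup>\<gamma> L(x)\<close>: a large \<open>a\<close> makes this term small compared to \<open>x\<^sup>\<gamma> L(x)\<close>.\<close>
lemma potter_rescaled_term:
  fixes L :: "real \<Rightarrow> real"
  assumes pot: "\<And>y z c. Y0 \<le> y \<Longrightarrow> Y0 \<le> z \<Longrightarrow> y \<le> c * z \<Longrightarrow> z \<le> c * y \<Longrightarrow> L y \<le> E * c powr (\<gamma> / 2) * L z"
    and a: "1 \<le> a" and x: "Y0 \<le> x / a" "0 < x"
  shows "(a / x) powr (- \<gamma>) * L (x / a) \<le> E / a powr (\<gamma> / 2) * (x powr \<gamma> * L x)"
proof -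
  have xa: "x / a \<le> x" using a x by (simp add: field_simps)
  moreover have "x \<le> a * x" using mult_right_mono[OF a, of x] x by simp
  ultimately have "x / a \<le> a * x" "x \<le> a * (x / a)" using a by auto
  then have Lxa: "L (x / a) \<le> E * a powr (\<gamma> / 2) * L x"
    using x(1) xa by (intro pot) auto
  have pw: "(a / x) powr (- \<gamma>) = x powr \<gamma> / (a powr (\<gamma> / 2) * a powr (\<gamma> / 2))"
    using a x by (simp add: powr_divide powr_minus_divide flip: powr_add)
  have "(a / x) powr (- \<gamma>) * L (x / a)
      \<le> x powr \<gamma> / (a powr (\<gamma> / 2) * a powr (\<gamma> / 2)) * (E * a powr (\<gamma> / 2) * L x)"
    unfolding pw by (rule mult_left_mono[OF Lxa]) simp
  also have "\<dots> = E / a powr (\<gamma> / 2) * (x powr \<gamma> * L x)"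
    using a by (simp add: field_simps)
  finally show ?thesis .
qed

lemma absorbing_scale_exists:
  fixes \<gamma> \<epsilon> K :: real
  assumes "0 < \<gamma>" "0 < \<epsilon>" "0 \<le> K"
  shows "\<exists>a\<ge>1. K * exp \<gamma> / a powr (\<gamma> / 2) \<le> \<epsilon>"
proof -
  define D where "D = K * exp \<gamma> / \<epsilon> + 1"
  have D: "1 \<le> D" unfolding D_def using assms by simp
  have "(D powr (2 / \<gamma>)) powr (\<gamma> / 2) = D"
    using D assms by (simp add: powr_powr)
  moreover have "K * exp \<gamma> \<le> \<epsilon> * D"
    unfolding D_def using assms by (simp add: field_simps)
  ultimately have "K * exp \<gamma> / (D powr (2 / \<gamma>)) powr (\<gamma> / 2) \<le> \<epsilon>"
    using D by (simp add: divide_le_eq mult.commute)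
  moreover have "1 \<le> D powr (2 / \<gamma>)"
    using D assms by (intro ge_one_powr_ge_zero) auto
  ultimately show ?thesis by blast
qed

text \<open>Combining the upper estimate of the variance with its assumed lower bound at the
  scale \<open>u = a/n\<close>, for a suitably large constant \<open>a\<close>: the terms \<open>K\<^sub>1 u\<^sup>-\<^sup>\<gamma> L(1/u)\<close> and \<open>K\<^sub>2\<close> then
  absorb at most half of \<open>C\<^sub>2 n\<^sup>\<gamma> L(n)\<close>, and the remaining half is carried by \<open>n\<^sup>2 G(a/n)\<close>.\<close>
lemma lower_bound_at_scale:
  fixes V :: "nat \<Rightarrow> real" and G L :: "real \<Rightarrow> real"
  assumes sv: "slowly_varying L" and \<gamma>: "0 < \<gamma>" and C2: "0 < C2" and K1: "0 \<le> K1" and "0 < \<delta>"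
    and upper: "\<And>n u. 0 < u \<Longrightarrow> u \<le> \<delta> \<Longrightarrow> V n \<le> (real n)\<^sup>2 * G u + K1 * u powr (- \<gamma>) * L (1 / u) + K2"
    and lower: "\<forall>\<^sub>F n in sequentially. C2 * (real n powr \<gamma> * L (real n)) \<le> V n"
  shows "\<exists>a>0. \<forall>\<^sub>F n in sequentially. C2 / 2 * (real n powr \<gamma> * L (real n)) \<le> (real n)\<^sup>2 * G (a / real n)"
proof -
  obtain Y0 where pot: "\<And>y z c. Y0 \<le> y \<Longrightarrow> Y0 \<le> z \<Longrightarrow> y \<le> c * z \<Longrightarrow> z \<le> c * y \<Longrightarrow>
      L y \<le> exp \<gamma> * c powr (\<gamma> / 2) * L z"
    using potter_bound[OF sv, of "\<gamma> / 2"] \<gamma> by auto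
  obtain a where a: "1 \<le> a" and small: "K1 * exp \<gamma> / a powr (\<gamma> / 2) \<le> C2 / 4"
    using absorbing_scale_exists[OF \<gamma> _ K1, of "C2 / 4"] C2 by auto
  have real_large: "\<forall>\<^sub>F n in sequentially. c \<le> real n" for c
    using filterlim_real_sequentially by (simp add: filterlim_at_top)
  have "\<forall>\<^sub>F n in sequentially. K2 \<le> C2 / 4 * (real n powr \<gamma> * L (real n))"
    using eventually_absorbs_constant[OF sv \<gamma>] C2 by simp
  then have "\<forall>\<^sub>F n in sequentially. K2 \<le> C2 / 4 * (real n powr \<gamma> * L (real n)) \<and>
      C2 * (real n powr \<gamma> * L (real n)) \<le> V n \<and> a / \<delta> \<le> real n \<and> a * Y0 \<le> real n"
    using lower real_large by (intro eventually_conj) auto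
  then have "\<forall>\<^sub>F n in sequentially. C2 / 2 * (real n powr \<gamma> * L (real n)) \<le> (real n)\<^sup>2 * G (a / real n)"
  proof eventually_elim
    case (elim n)
    have "0 < a / \<delta>" using a \<open>0 < \<delta>\<close> by simp
    then have n: "0 < real n" using elim by linarith
    then have "a / real n \<le> \<delta>" "Y0 \<le> real n / a"
      using elim a \<open>0 < \<delta>\<close> by (simp_all add: field_simps)
    have "K1 * ((a / real n) powr (- \<gamma>) * L (real n / a))
        \<le> K1 * (exp \<gamma> / a powr (\<gamma> / 2) * (real n powr \<gamma> * L (real n)))"
      using potter_rescaled_term[OF pot a \<open>Y0 \<le> real n / a\<close> n] K1 by (rule mult_left_mono)
    also have "\<dots> \<le> C2 / 4 * (real n powr \<gamma> * L (real n))"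
      using small sv unfolding slowly_varying_def
      by (subst mult.assoc[symmetric], intro mult_right_mono) (auto simp: less_imp_le)
    finally have "K1 * ((a / real n) powr (- \<gamma>) * L (real n / a)) \<le> C2 / 4 * (real n powr \<gamma> * L (real n))" .
    moreover have "V n \<le> (real n)\<^sup>2 * G (a / real n) + K1 * ((a / real n) powr (- \<gamma>) * L (real n / a)) + K2"
      using upper[of "a / real n" n] n a \<open>a / real n \<le> \<delta>\<close> by (simp add: mult.assoc)
    ultimately show ?case using elim by linarith
  qed
  then show ?thesis using a by (intro exI[of _ a]) auto
qed

lemma nat_between_ratio:
  fixes a x :: real
  assumes "0 < x" "x \<le> a"
  shows "\<exists>n::nat. a / x \<le> real n \<and> real n \<le> 2 * a / x"
proof -
  have "1 \<le> a / x" using assms by simp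
  then show ?thesis
    by (intro exI[of _ "nat \<lceil>a / x\<rceil>"]) (auto intro: order_trans[OF of_int_ceiling_le_add_one])
qed

lemma power_at_reciprocal_scale:
  fixes a x \<gamma> :: real
  assumes "\<gamma> < 2" "0 < a" "0 < x" "0 < n" "n \<le> 2 * a / x"
  shows "(2 * a) powr (\<gamma> - 2) * x powr (2 - \<gamma>) \<le> n powr (\<gamma> - 2)"
proof -
  have "x powr (2 - \<gamma>) = 1 / x powr (\<gamma> - 2)"
    using powr_minus_divide[of x "\<gamma> - 2"] by simp
  then have "(2 * a) powr (\<gamma> - 2) * x powr (2 - \<gamma>) = (2 * a / x) powr (\<gamma> - 2)"
    using assms by (simp add: powr_divide)
  also have "\<dots> \<le> n powr (\<gamma> - 2)"
    using assms by (intro powr_mono2') auto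
  finally show ?thesis .
qed

lemma slowly_varying_at_reciprocal_scale:
  fixes L :: "real \<Rightarrow> real" and a x n :: real
  assumes pot: "\<And>y z k. Y0 \<le> y \<Longrightarrow> Y0 \<le> z \<Longrightarrow> y \<le> k * z \<Longrightarrow> z \<le> k * y \<Longrightarrow> L y \<le> E * k powr 1 * L z"
    and "0 < a" "0 < x" "0 < n" "a / x \<le> n" "n \<le> 2 * a / x" "Y0 \<le> 1 / x" "Y0 \<le> n" "0 < E"
  shows "L (1 / x) / (E * (2 * a + 1 / a)) \<le> L n"
proof -
  define k where "k = 2 * a + 1 / a"
  have k: "k > 0" unfolding k_def using assms by (intro add_pos_pos) auto
  have "n \<le> 2 * a * (1 / x)" using assms by simp
  also have "\<dots> \<le> k * (1 / x)" unfolding k_def using assms by (intro mult_right_mono) auto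
  finally have "n \<le> k * (1 / x)" .
  have "1 / x \<le> n / a" using assms by (simp add: field_simps)
  also have "\<dots> \<le> k * n" unfolding k_def using assms by (simp add: distrib_right)
  finally have "1 / x \<le> k * n" .
  with \<open>n \<le> k * (1 / x)\<close> have "L (1 / x) \<le> E * k powr 1 * L n"
    using assms by (intro pot) auto
  then show ?thesis
    using k \<open>0 < E\<close> unfolding k_def[symmetric] by (simp add: pos_divide_le_eq mult.commute)
qed

lemma eventually_at_right_strict_lower_bound:
  fixes G f :: "real \<Rightarrow> real"
  assumes "0 < d" "0 < C" "\<And>x. 0 < x \<Longrightarrow> x < d \<Longrightarrow> 0 < f x \<and> C * f x \<le> G x"
  shows "\<exists>C3>0. \<forall>\<^sub>F x in at_right 0. G x > C3 * f x"
proof -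
  have "C / 2 * f x < G x" if "0 < x" "x < d" for x
  proof -
    have "C / 2 * f x < C * f x" using assms(2) assms(3)[OF that] by (intro mult_strict_right_mono) auto
    then show ?thesis using assms(3)[OF that] by linarith
  qed
  then show ?thesis
    using assms(1,2) unfolding eventually_at_right_field by (intro exI[of _ "C / 2"]) auto
qed

text \<open>From the integers to the continuum: a lower bound \<open>n\<^sup>2 G(a/n) \<ge> c n\<^sup>\<gamma> L(n)\<close> along the
  integers yields \<open>G(x) > C\<^sub>3 x\<^sup>2\<^sup>-\<^sup>\<gamma> L(1/x)\<close> near \<open>0\<close>: for small \<open>x\<close> pick \<open>n\<close> with \<open>n x \<in> [a, 2a]\<close>,
  so that \<open>G(x) \<ge> G(a/n) \<ge> c n\<^sup>\<gamma>\<^sup>-\<^sup>2 L(n)\<close> by monotonicity of \<open>G\<close>.\<close>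
lemma lower_bound_transfer:
  fixes G L :: "real \<Rightarrow> real"
  assumes sv: "slowly_varying L" and \<gamma>: "\<gamma> < 2" and c: "0 < c" and a: "0 < a"
    and mono: "\<And>x y. 0 < x \<Longrightarrow> x \<le> y \<Longrightarrow> G x \<le> G y"
    and seq: "\<forall>\<^sub>F n in sequentially. c * (real n powr \<gamma> * L (real n)) \<le> (real n)\<^sup>2 * G (a / real n)"
  shows "\<exists>C3>0. \<forall>\<^sub>F x in at_right 0. G x > C3 * x powr (2 - \<gamma>) * L (1 / x)"
proof -
  have Lpos: "\<And>x. L x > 0" using sv unfolding slowly_varying_def by auto
  obtain Y0 where "Y0 > 0" and pot: "\<And>y z k. Y0 \<le> y \<Longrightarrow> Y0 \<le> z \<Longrightarrow> y \<le> k * z \<Longrightarrow> z \<le> k * y \<Longrightarrow>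
      L y \<le> exp 2 * k powr 1 * L z"
    using potter_bound[OF sv, of 1] by auto
  obtain N where N: "\<And>n. n \<ge> N \<Longrightarrow> c * (real n powr \<gamma> * L (real n)) \<le> (real n)\<^sup>2 * G (a / real n)"
    using seq unfolding eventually_sequentially by auto
  define C where "C = c * (2 * a) powr (\<gamma> - 2) / (exp 2 * (2 * a + 1 / a))"
  have "C * (x powr (2 - \<gamma>) * L (1 / x)) \<le> G x"
    if x: "0 < x" "x < min (min a (1 / Y0)) (min (a / (real N + 1)) (a / Y0))" for x
  proof -
    obtain n where n: "a / x \<le> real n" "real n \<le> 2 * a / x"
      using nat_between_ratio[of x a] x by auto
    have "real N + 1 \<le> a / x" "Y0 \<le> 1 / x" "Y0 \<le> a / x"
      using x a \<open>Y0 > 0\<close> by (simp_all add: field_simps)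
    then have nN: "n \<ge> N" and npos: "real n > 0" and "Y0 \<le> real n"
      using n by linarith+
    have "C * (x powr (2 - \<gamma>) * L (1 / x))
        = c * ((2 * a) powr (\<gamma> - 2) * x powr (2 - \<gamma>)) * (L (1 / x) / (exp 2 * (2 * a + 1 / a)))"
      unfolding C_def by simp
    also have "\<dots> \<le> c * real n powr (\<gamma> - 2) * L (real n)"
      using power_at_reciprocal_scale[OF \<gamma> a x(1) npos n(2)] c Lpos[of "1 / x"] a
        slowly_varying_at_reciprocal_scale[OF pot a x(1) npos n \<open>Y0 \<le> 1 / x\<close> \<open>Y0 \<le> real n\<close>]
      by (intro mult_mono mult_left_mono) auto
    also have "\<dots> = c * (real n powr \<gamma> * L (real n)) / (real n)\<^sup>2"
      using npos powr_realpow[of "real n" 2] by (simp add: powr_diff)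
    also have "\<dots> \<le> G (a / real n)"
      using N[OF nN] npos by (simp add: divide_le_eq mult.commute)
    also have "\<dots> \<le> G x"
      using n npos x a by (intro mono) (simp_all add: field_simps)
    finally show ?thesis .
  qed
  moreover have "C > 0" unfolding C_def using a c by (intro divide_pos_pos mult_pos_pos add_pos_pos) auto
  ultimately have "\<exists>C3>0. \<forall>\<^sub>F x in at_right 0. G x > C3 * (x powr (2 - \<gamma>) * L (1 / x))"
    using a \<open>Y0 > 0\<close> Lpos
    by (intro eventually_at_right_strict_lower_bound[of "min (min a (1 / Y0)) (min (a / (real N + 1)) (a / Y0))"]) auto
  then show ?thesis by (simp add: mult.assoc)
qed

theorem lemma3:
  fixes M :: "'a measure" and X :: "nat \<Rightarrow> 'a \<Rightarrow> real" and F :: "real measure"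
    and L :: "real \<Rightarrow> real" and \<gamma> C1 C2 :: real
  assumes "prob_space M"
    and "weakly_stationary M X"
    and "spectral_measure_of M X F"
    and "0 < \<gamma>" and "\<gamma> < 2"
    and "slowly_varying L"
    and "C1 > 0" and "C2 > 0"
    and "\<forall>\<^sub>F x in at_right 0. measure F {-x..x} \<le> C1 * x powr (2 - \<gamma>) * L (1 / x)"
    and "\<forall>\<^sub>F n in sequentially.
           covar M (\<lambda>\<omega>. \<Sum>i=1..n. X i \<omega>) (\<lambda>\<omega>. \<Sum>i=1..n. X i \<omega>)
             \<ge> C2 * (real n powr \<gamma> * L (real n))"
  shows "\<exists>C3>0. \<forall>\<^sub>F x in at_right 0. measure F {-x..x} > C3 * x powr (2 - \<gamma>) * L (1 / x)"
proof -
  have sets: "sets F = sets borel" and fin: "finite_measure F" and supp: "emeasure F (- {-pi..pi}) = 0"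
    using assms(3) unfolding spectral_measure_of_def by auto
  have variance: "covar M (\<lambda>\<omega>. \<Sum>i=1..n. X i \<omega>) (\<lambda>\<omega>. \<Sum>i=1..n. X i \<omega>) = (\<integral>t. fejer_kernel n t \<partial>F)" for n
    by (rule variance_partial_sum_spectral[OF assms(1-3)])
  obtain \<delta> K1 K2 where "\<delta> > 0" "K1 \<ge> 0" and upper: "\<And>n u. 0 < u \<Longrightarrow> u \<le> \<delta> \<Longrightarrow>
      (\<integral>t. fejer_kernel n t \<partial>F) \<le> (real n)\<^sup>2 * measure F {-u..u} + K1 * u powr (- \<gamma>) * L (1 / u) + K2"
    using integral_fejer_kernel_upper_estimate[OF sets fin supp assms(4,6) _ assms(9)] assms(7) by force
  obtain a where "a > 0" and at_scale: "\<forall>\<^sub>F n in sequentially.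
      C2 / 2 * (real n powr \<gamma> * L (real n)) \<le> (real n)\<^sup>2 * measure F {-(a / real n)..a / real n}"
    using lower_bound_at_scale[OF assms(6,4,8) \<open>K1 \<ge> 0\<close> \<open>\<delta> > 0\<close> upper]
      assms(10) unfolding variance by blast
  have mono: "measure F {-x..x} \<le> measure F {-y..y}" if "x \<le> y" for x y
    using that sets by (intro finite_measure.finite_measure_mono[OF fin]) auto
  show ?thesis
    using lower_bound_transfer[OF assms(6,5) _ \<open>a > 0\<close> mono at_scale] assms(8) by simp
qed

end
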